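(* Let $G = \mathbb{Z}_9$, $k = 3$ and $N = \langle 3\rangle = \{0,3,6\}$. Then $|G| = k^2$, $N\le G$ with $|N|=k$, the sum of the elements of $N$ is $0$, and the sum of the elements of $G/N$ is the identity coset $N$, yet $\exp(G)=9$ does not divide $k$ and $G$ has no pandiagonal magic Cayley-sudoku table. Also, for $G=\mathbb{Z}_2\times\mathbb{Z}_2$, $k=2$ and any subgroup $N$ of order $2$, we have $|G|=k^2$ and $\exp(G)$ divides $k$, but $G$ has no pandiagonal magic Cayley-sudoku table. Consequently, in Theorem 4.1 the hypothesis that $\exp(G)$ divides $k$ cannot be omitted, and hypotheses (3) (product of elements of $N$ is $1$) and (4) (product of elements of $G/N$ is $N$) cannot both be omitted.
   Context: Theorem 4.1 states: if $G$ is a finite abelian group with $|G|=k^2$, $\exp(G)$ dividing $k$, $N\le G$ with $|N|=k$, (3) the product of all elements of $N$ is the identity, and (4) the product of all elements of $G/N$ is the identity coset $N$, then $G$ has a pandiagonal magic Cayley-sudoku table. A Cayley table of $G$ is a square array with rows and columns each labeled by a listing of all elements of $G$, entry in row $r$, column $c$ being $r+c$. A Cayley-sudoku table is a Cayley table whose body is partitioned into uniformly sized rectangular blocks (consecutive rows and columns) each containing every element exactly once. It is pandiagonal magic if the blocks are square and every row (left to right), column, broken diagonal and broken antidiagonal (top to bottom) sum of each block is the identity; broken diagonals of a $k\times k$ array are the entries at positions $(\ell,\ell+j)$, broken antidiagonals those at $(\ell,j-\ell)$, $\ell=1,\dots,k$, indices mod $k$. *)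

theory Defs
  imports "HOL-Algebra.Algebra"
begin

definition group_exponent :: "('a, 'b) monoid_scheme \<Rightarrow> nat" where
  "group_exponent G = (LEAST n. 0 < n \<and> (\<forall>x\<in>carrier G. x [^]\<^bsub>G\<^esub> n = \<one>\<^bsub>G\<^esub>))"

text \<open>A Cayley table of G has rows labelled by a listing R and columns by a listing C
  (indices 0..card-1); entry (r,c) is R r times C c.\<close>
definition pandiagonal_magic_cs_table ::
  "('a, 'b) monoid_scheme \<Rightarrow> nat \<Rightarrow> (nat \<Rightarrow> 'a) \<Rightarrow> (nat \<Rightarrow> 'a) \<Rightarrow> bool" where
  "pandiagonal_magic_cs_table G k R C \<longleftrightarrow>
     k * k = card (carrier G) \<and>
     bij_betw R {..<card (carrier G)} (carrier G) \<and>
     bij_betw C {..<card (carrier G)} (carrier G) \<and>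
     (\<forall>a<k. \<forall>b<k.
        let e = (\<lambda>i j. R (a * k + i) \<otimes>\<^bsub>G\<^esub> C (b * k + j)) in
        bij_betw (\<lambda>(i, j). e i j) ({..<k} \<times> {..<k}) (carrier G) \<and>
        (\<forall>i<k. finprod G (\<lambda>j. e i j) {..<k} = \<one>\<^bsub>G\<^esub>) \<and>
        (\<forall>j<k. finprod G (\<lambda>i. e i j) {..<k} = \<one>\<^bsub>G\<^esub>) \<and>
        (\<forall>j<k. finprod G (\<lambda>l. e l ((l + j) mod k)) {..<k} = \<one>\<^bsub>G\<^esub>) \<and>
        (\<forall>j<k. finprod G (\<lambda>l. e l ((j + k - l) mod k)) {..<k} = \<one>\<^bsub>G\<^esub>))"

definition has_pandiagonal_magic_cs_table :: "('a, 'b) monoid_scheme \<Rightarrow> bool" where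
  "has_pandiagonal_magic_cs_table G \<longleftrightarrow> (\<exists>k R C. pandiagonal_magic_cs_table G k R C)"

end

theory Submission
  imports Defs
begin

text \<open>
  In the cyclic
  group of order \<open>m\<^sup>2\<close>, row \<open>i\<close> of the block sums to \<open>m R\<^sub>i + \<Sum>\<^sub>j C\<^sub>j \<equiv> 0 (mod m\<^sup>2)\<close>,
  so all row labels \<open>R\<^sub>i\<close> are congruent mod \<open>m\<close>, and likewise all column labels; hence every
  entry of the block has the same residue mod \<open>m\<close>, although the block contains both \<open>0\<close> and
  \<open>1\<close>.  In a group of order 4 the blocks are \<open>2 \<times> 2\<close>, and the entries right of and below the
  corner are both its inverse, so a block repeats an element.
\<close>

lemma comm_group_DirProd:
  assumes "comm_group G" "comm_group H"
  shows "comm_group (G \<times>\<times> H)"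
proof -
  interpret G: comm_group G by (fact assms(1))
  interpret H: comm_group H by (fact assms(2))
  interpret group "G \<times>\<times> H" by (rule DirProd_group) unfold_locales
  show ?thesis
    by (rule group_comm_groupI) (auto simp: mult_DirProd' G.m_comm H.m_comm)
qed

lemma card_carrier_integer_mod_group:
  "0 < n \<Longrightarrow> card (carrier (integer_mod_group n)) = n"
  by (simp add: carrier_integer_mod_group)

lemma finprod_integer_mod_group:
  assumes "finite A" "f ` A \<subseteq> carrier (integer_mod_group n)"
  shows "finprod (integer_mod_group n) f A = sum f A mod int n"
  using assms
proof (induction A rule: finite_induct)
  case empty
  then show ?case by (simp add: finprod_def)
next
  case (insert a F)
  interpret comm_group "integer_mod_group n" by simp
  have "finprod (integer_mod_group n) f (insert a F) = (f a + finprod (integer_mod_group n) f F) mod int n"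
    using insert by (subst finprod_insert) auto
  also have "\<dots> = (f a + sum f F) mod int n" using insert by (simp add: mod_simps)
  finally show ?case using insert by simp
qed

lemma group_exponent_eqI:
  assumes "0 < n" "\<And>x. x \<in> carrier G \<Longrightarrow> x [^]\<^bsub>G\<^esub> n = \<one>\<^bsub>G\<^esub>"
    and "x \<in> carrier G" "\<And>m. 0 < m \<Longrightarrow> x [^]\<^bsub>G\<^esub> m = \<one>\<^bsub>G\<^esub> \<Longrightarrow> n \<le> m"
  shows "group_exponent G = n"
  unfolding group_exponent_def by (rule Least_equality) (use assms in auto)

lemma group_exponent_integer_mod_group:
  assumes "0 < n"
  shows "group_exponent (integer_mod_group n) = n"
proof (rule group_exponent_eqI)
  \<comment> \<open>the witness is \<open>1 mod n\<close> rather than \<open>1\<close> so that \<open>n = 1\<close> is covered\<close>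
  show "x [^]\<^bsub>integer_mod_group n\<^esub> n = \<one>\<^bsub>integer_mod_group n\<^esub>" for x
    by simp
  show "1 mod int n \<in> carrier (integer_mod_group n)"
    using assms by (simp add: carrier_integer_mod_group)
  fix m :: nat
  assume "0 < m" "(1 mod int n) [^]\<^bsub>integer_mod_group n\<^esub> m = \<one>\<^bsub>integer_mod_group n\<^esub>"
  then have "int n dvd int m" by (simp add: mod_mult_right_eq mod_eq_0_iff_dvd)
  with \<open>0 < m\<close> show "n \<le> m" by (simp add: dvd_imp_le)
qed (fact assms)

lemma finprod_integer_mod_group_add_const:
  assumes "finite A" "0 < n"
  shows "finprod (integer_mod_group n) (\<lambda>j. (x + f j) mod int n) A
           = (int (card A) * x + sum f A) mod int n"
proof -
  have "finprod (integer_mod_group n) (\<lambda>j. (x + f j) mod int n) A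
          = (\<Sum>j\<in>A. (x + f j) mod int n) mod int n"
    using assms by (intro finprod_integer_mod_group) (auto simp: carrier_integer_mod_group)
  also have "\<dots> = (\<Sum>j\<in>A. x + f j) mod int n"
    by (simp add: mod_sum_eq)
  finally show ?thesis by (simp add: sum.distrib)
qed

lemma mult_add_mod_square_cancel:
  fixes k x y s :: int
  assumes "(k * x + s) mod (k * k) = (k * y + s) mod (k * k)" "k \<noteq> 0"
  shows "x mod k = y mod k"
proof -
  have "k * k dvd k * (x - y)"
    using assms(1) by (simp add: mod_eq_dvd_iff algebra_simps)
  then have "k dvd x - y" using assms(2) by simp
  then show ?thesis by (simp add: mod_eq_dvd_iff)
qed

lemma pandiagonal_magic_cs_table_first_block:
  assumes "group G" "pandiagonal_magic_cs_table G k R C"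
  shows "k * k = card (carrier G)"
    and "bij_betw (\<lambda>(i, j). R i \<otimes>\<^bsub>G\<^esub> C j) ({..<k} \<times> {..<k}) (carrier G)"
    and "\<And>i. i < k \<Longrightarrow> finprod G (\<lambda>j. R i \<otimes>\<^bsub>G\<^esub> C j) {..<k} = \<one>\<^bsub>G\<^esub>"
    and "\<And>j. j < k \<Longrightarrow> finprod G (\<lambda>i. R i \<otimes>\<^bsub>G\<^esub> C j) {..<k} = \<one>\<^bsub>G\<^esub>"
proof -
  note table = assms(2)[unfolded pandiagonal_magic_cs_table_def]
  show k: "k * k = card (carrier G)" using table by blast
  have "\<one>\<^bsub>G\<^esub> \<in> R ` {..<card (carrier G)}"
    using table monoid.one_closed[OF group.is_monoid[OF assms(1)]] by (simp add: bij_betw_def)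
  then have "0 < k" using k by (cases k) auto
  then have "bij_betw (\<lambda>(i, j). R i \<otimes>\<^bsub>G\<^esub> C j) ({..<k} \<times> {..<k}) (carrier G) \<and>
      (\<forall>i<k. finprod G (\<lambda>j. R i \<otimes>\<^bsub>G\<^esub> C j) {..<k} = \<one>\<^bsub>G\<^esub>) \<and>
      (\<forall>j<k. finprod G (\<lambda>i. R i \<otimes>\<^bsub>G\<^esub> C j) {..<k} = \<one>\<^bsub>G\<^esub>)"
    using table[THEN conjunct2, THEN conjunct2, THEN conjunct2, rule_format, OF \<open>0 < k\<close> \<open>0 < k\<close>]
    by (simp add: Let_def)
  then show "bij_betw (\<lambda>(i, j). R i \<otimes>\<^bsub>G\<^esub> C j) ({..<k} \<times> {..<k}) (carrier G)"
    and "\<And>i. i < k \<Longrightarrow> finprod G (\<lambda>j. R i \<otimes>\<^bsub>G\<^esub> C j) {..<k} = \<one>\<^bsub>G\<^esub>"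
    and "\<And>j. j < k \<Longrightarrow> finprod G (\<lambda>i. R i \<otimes>\<^bsub>G\<^esub> C j) {..<k} = \<one>\<^bsub>G\<^esub>"
    by blast+
qed

theorem integer_mod_group_square_no_pandiagonal_magic_cs_table:
  assumes "1 < m"
  shows "\<not> has_pandiagonal_magic_cs_table (integer_mod_group (m * m))"
proof
  let ?n = "m * m" and ?G = "integer_mod_group (m * m)"
  assume "has_pandiagonal_magic_cs_table ?G"
  then obtain k R C where table: "pandiagonal_magic_cs_table ?G k R C"
    unfolding has_pandiagonal_magic_cs_table_def by blast
  have n: "0 < ?n" using assms by simp
  note block = pandiagonal_magic_cs_table_first_block[OF group_integer_mod_group table]
  have "k ^ 2 = m ^ 2"
    using block(1) card_carrier_integer_mod_group[OF n] by (simp add: power2_eq_square)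
  then have k: "k = m" by simp
  have entry: "R i \<otimes>\<^bsub>?G\<^esub> C j = (R i + C j) mod int ?n" for i j by simp
  have rows: "(int m * R i + sum C {..<m}) mod (int m * int m) = 0" if "i < m" for i
    using block(3)[of i] that finprod_integer_mod_group_add_const[OF _ n, of "{..<m}" "R i" C]
    by (simp add: k)
  have cols: "(int m * C j + sum R {..<m}) mod (int m * int m) = 0" if "j < m" for j
  proof -
    have "(\<lambda>i. R i \<otimes>\<^bsub>?G\<^esub> C j) = (\<lambda>i. (C j + R i) mod int ?n)"
      by (simp add: add.commute)
    then show ?thesis
      using block(4)[of j] that finprod_integer_mod_group_add_const[OF _ n, of "{..<m}" "C j" R]
      by (simp add: k)
  qed
  have entry_mod: "(R i \<otimes>\<^bsub>?G\<^esub> C j) mod int m = (R 0 + C 0) mod int m"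
    if "i < m" "j < m" for i j
  proof -
    have row_class: "R i mod int m = R 0 mod int m"
      by (rule mult_add_mod_square_cancel[of "int m" _ "sum C {..<m}"])
        (use rows[OF that(1)] rows[of 0] assms in simp_all)
    have col_class: "C j mod int m = C 0 mod int m"
      by (rule mult_add_mod_square_cancel[of "int m" _ "sum R {..<m}"])
        (use cols[OF that(2)] cols[of 0] assms in simp_all)
    have "(R i + C j) mod int m = (R 0 + C 0) mod int m"
      using row_class col_class by (rule mod_add_cong)
    moreover have "(R i \<otimes>\<^bsub>?G\<^esub> C j) mod int m = (R i + C j) mod int m"
      unfolding entry by (rule mod_mod_cancel) simp
    ultimately show ?thesis by simp
  qed
  have "{0, 1} \<subseteq> (\<lambda>(i, j). R i \<otimes>\<^bsub>?G\<^esub> C j) ` ({..<m} \<times> {..<m})"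
  proof -
    have "1 < int ?n" using less_1_mult[OF assms assms] by linarith
    then show ?thesis using block(2) by (simp add: k bij_betw_def carrier_integer_mod_group)
  qed
  then obtain i j i' j' where "i < m" "j < m" "R i \<otimes>\<^bsub>?G\<^esub> C j = 0"
    and "i' < m" "j' < m" "R i' \<otimes>\<^bsub>?G\<^esub> C j' = 1"
    by auto
  then have "0 mod int m = 1 mod int m"
    using entry_mod[of i j] entry_mod[of i' j'] by simp
  with assms show False by simp
qed

theorem order_4_no_pandiagonal_magic_cs_table:
  assumes "comm_group G" "card (carrier G) = 4"
  shows "\<not> has_pandiagonal_magic_cs_table G"
proof
  interpret comm_group G by (fact assms(1))
  assume "has_pandiagonal_magic_cs_table G"
  then obtain k R C where table: "pandiagonal_magic_cs_table G k R C"
    unfolding has_pandiagonal_magic_cs_table_def by blast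
  let ?e = "\<lambda>i j. R i \<otimes>\<^bsub>G\<^esub> C j"
  note block = pandiagonal_magic_cs_table_first_block[OF is_group table]
  have "k ^ 2 = 2 ^ 2" using block(1) assms(2) by (simp add: power2_eq_square)
  then have k: "k = 2" using power_eq_iff_eq_base[of 2 k 2] by simp
  have closed: "?e i j \<in> carrier G" if "i < 2" "j < 2" for i j
    using bij_betw_apply[OF block(2), of "(i, j)"] that k by simp
  have two: "{..<2::nat} = {0, 1}" by auto
  have "?e 0 0 \<otimes>\<^bsub>G\<^esub> ?e 0 1 = ?e 0 0 \<otimes>\<^bsub>G\<^esub> ?e 1 0"
    using block(3)[of 0] block(4)[of 0] closed by (simp add: k two)
  then have corner: "?e 0 1 = ?e 1 0" using closed by (subst (asm) l_cancel) auto
  have inj: "inj_on (\<lambda>(i, j). ?e i j) ({..<2} \<times> {..<2})"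
    using block(2) k by (simp add: bij_betw_def)
  have "(0::nat, 1::nat) = (1, 0)"
  proof (rule inj_onD[OF inj])
    show "(\<lambda>(i, j). ?e i j) (0, 1) = (\<lambda>(i, j). ?e i j) (1, 0)" using corner by simp
  qed auto
  then show False by simp
qed

lemma subgroup_Z9_multiples_of_3: "subgroup {0, 3, 6} (integer_mod_group 9)"
  by (rule subgroup.intro) (auto simp: carrier_integer_mod_group)

lemma carrier_Z9: "carrier (integer_mod_group 9) = {0, 1, 2, 3, 4, 5, 6, 7, 8}"
  by (auto simp: carrier_integer_mod_group)

lemma carrier_Z9_Mod_multiples_of_3:
  "carrier (integer_mod_group 9 Mod {0, 3, 6}) = {{0, 3, 6}, {1, 4, 7}, {2, 5, 8}}"
  unfolding FactGroup_def RCOSETS_def r_coset_def carrier_Z9 by auto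

lemma finprod_Z9_Mod_multiples_of_3:
  "finprod (integer_mod_group 9 Mod {0, 3, 6}) (\<lambda>S. S) (carrier (integer_mod_group 9 Mod {0, 3, 6}))
     = {0, 3, 6}"
proof -
  let ?Q = "integer_mod_group 9 Mod {0, 3, 6}" and ?G = "integer_mod_group 9"
  have coset_products: "{2, 5, 8} <#>\<^bsub>?G\<^esub> {0, 3, 6} = {2, 5, 8}"
    "{1, 4, 7} <#>\<^bsub>?G\<^esub> {2, 5, 8} = {0, 3, 6}"
    "{0, 3, 6} <#>\<^bsub>?G\<^esub> {0, 3, 6} = {0, 3, 6}"
    unfolding set_mult_def by auto
  interpret Q: comm_group ?Q
    by (rule comm_group.abelian_FactGroup[OF abelian_integer_mod_group subgroup_Z9_multiples_of_3])
  have cosets: "{{0, 3, 6}, {1, 4, 7}, {2, 5, 8 :: int}} \<subseteq> carrier ?Q"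
    by (simp add: carrier_Z9_Mod_multiples_of_3)
  have "{0, 3, 6 :: int} \<notin> {{1, 4, 7}, {2, 5, 8}}" "{1, 4, 7 :: int} \<notin> {{2, 5, 8}}"
    by (auto dest: arg_cong[where f = "\<lambda>S. (0::int) \<in> S"] arg_cong[where f = "\<lambda>S. (1::int) \<in> S"])
  then have "finprod ?Q (\<lambda>S. S) {{0, 3, 6}, {1, 4, 7}, {2, 5, 8}}
      = {0, 3, 6} <#>\<^bsub>?G\<^esub> ({1, 4, 7} <#>\<^bsub>?G\<^esub> ({2, 5, 8} <#>\<^bsub>?G\<^esub> {0, 3, 6}))"
    using cosets by (simp del: insert_iff)
  also have "\<dots> = {0, 3, 6}"
    by (simp only: coset_products)
  finally show ?thesis unfolding carrier_Z9_Mod_multiples_of_3 .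
qed

abbreviation Klein_four :: "(int \<times> int) monoid" where
  "Klein_four \<equiv> integer_mod_group 2 \<times>\<times> integer_mod_group 2"

lemma comm_group_Klein_four: "comm_group Klein_four"
  by (simp add: comm_group_DirProd)

lemma card_carrier_Klein_four: "card (carrier Klein_four) = 4"
  by (simp add: carrier_integer_mod_group card_cartesian_product)

lemma group_exponent_Klein_four: "group_exponent Klein_four = 2"
proof (rule group_exponent_eqI)
  interpret comm_group Klein_four by (rule comm_group_Klein_four)
  show "x [^]\<^bsub>Klein_four\<^esub> (2::nat) = \<one>\<^bsub>Klein_four\<^esub>" if "x \<in> carrier Klein_four" for x
    using that unfolding numeral_2_eq_2 by (auto simp: carrier_integer_mod_group)
  show "(1, 0) \<in> carrier Klein_four" by (simp add: carrier_integer_mod_group)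
  fix m :: nat
  assume "0 < m" and pow: "(1, 0) [^]\<^bsub>Klein_four\<^esub> m = \<one>\<^bsub>Klein_four\<^esub>"
  show "2 \<le> m"
  proof (rule ccontr)
    assume "\<not> 2 \<le> m"
    with \<open>0 < m\<close> have "m = 1" by simp
    with pow show False by simp
  qed
qed simp

lemma subgroup_Klein_four: "subgroup {(0, 0), (1, 0)} Klein_four"
  by (rule subgroup.intro) (auto simp: carrier_integer_mod_group)

theorem lemma4p4:
  shows "(let G = integer_mod_group 9; N = {0, 3, 6} in
           card (carrier G) = 3 ^ 2 \<and> subgroup N G \<and> card N = 3 \<and>
           finprod G (\<lambda>x. x) N = \<one>\<^bsub>G\<^esub> \<and>
           finprod (G Mod N) (\<lambda>S. S) (carrier (G Mod N)) = N \<and>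
           group_exponent G = 9 \<and> \<not> group_exponent G dvd 3 \<and>
           \<not> has_pandiagonal_magic_cs_table G) \<and>
         (let G = DirProd (integer_mod_group 2) (integer_mod_group 2) in
           card (carrier G) = 2 ^ 2 \<and> group_exponent G dvd 2 \<and>
           \<not> has_pandiagonal_magic_cs_table G \<and>
           (\<exists>N. subgroup N G \<and> card N = 2))"
proof -
  have "finprod (integer_mod_group 9) (\<lambda>x. x) {0, 3, 6} = \<one>\<^bsub>integer_mod_group 9\<^esub>"
    by (simp add: finprod_integer_mod_group carrier_Z9)
  moreover have "\<not> has_pandiagonal_magic_cs_table (integer_mod_group 9)"
    using integer_mod_group_square_no_pandiagonal_magic_cs_table[of 3] by simp
  moreover have "\<not> has_pandiagonal_magic_cs_table Klein_four"
    using order_4_no_pandiagonal_magic_cs_table comm_group_Klein_four card_carrier_Klein_four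
    by blast
  moreover have "\<exists>N. subgroup N Klein_four \<and> card N = 2"
    using subgroup_Klein_four by force
  ultimately show ?thesis
    using subgroup_Z9_multiples_of_3 finprod_Z9_Mod_multiples_of_3
      group_exponent_integer_mod_group[of 9] group_exponent_Klein_four card_carrier_Klein_four
    by (simp add: Let_def carrier_Z9)
qed

end
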